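(* Let $R:K\to H$ be a Yetter--Drinfeld relative Rota--Baxter operator on the Hopf algebra $(H,\cdot,1,\Delta,\epsilon,S_H)$ with respect to $(K,\rightharpoonup)$. Define $S_K:K\to K$ by $S_K(a):=R(a_1)\rightharpoonup R^{-1}\big(S_H(R(a_2))\big)$. Then $S_K(a_1)\cdot_K a_2=\epsilon(a)1_K=a_1\cdot_K S_K(a_2)$ for all $a\in K$; consequently $K$ is a Hopf monoid in ${}^H_H\mathcal{YD}$ with antipode $S_K$.
   Context: Conventions: $\Bbbk$ is a field; algebras are associative unital, coalgebras coassociative counital; Sweedler notation $\Delta(c)=c_1\otimes c_2$ (summation omitted), iterated as $c_1\otimes c_2\otimes c_3$ etc. Yetter--Drinfeld modules: for a Hopf algebra $A$ with antipode $T$, a left-left Yetter--Drinfeld module is a left $A$-module $(V,\triangleright)$ and left $A$-comodule $\rho(v)=v_{-1}\otimes v_0$ with $\rho(a\triangleright v)=a_1v_{-1}T(a_3)\otimes a_2\triangleright v_0$; these form the braided monoidal category ${}^A_A\mathcal{YD}$ with braiding $\sigma(v\otimes w)=v_{-1}\triangleright w\otimes v_0$. A bimonoid in ${}^A_A\mathcal{YD}$ is an object with algebra and coalgebra structure maps in ${}^A_A\mathcal{YD}$, $\epsilon$ multiplicative, $\epsilon(1)=1$, $\Delta(1)=1\otimes1$, and $\Delta\circ m=(m\otimes m)(\mathrm{Id}\otimes\sigma\otimes\mathrm{Id})(\Delta\otimes\Delta)$; a Hopf monoid is a bimonoid with antipode (convolution inverse of the identity). Definition (Yetter--Drinfeld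 relative (pre-)Rota--Baxter operator). Let $(H,\cdot,1,\Delta,\epsilon,S_H)$ be a Hopf algebra and $(K,\cdot_K,1_K,\Delta,\epsilon)$ a bimonoid in ${}^H_H\mathcal{YD}$ with $H$-action $\rightharpoonup$. A coalgebra morphism $R:K\to H$ is a Yetter--Drinfeld relative pre-Rota--Baxter operator if for all $a,b\in K$: (RB1) $R(a)\cdot R(b)=R\big(a_1\cdot_K(R(a_2)\rightharpoonup b)\big)$; (RB2) $S_HR(R(a_1)\rightharpoonup b_1)\cdot R(a_2)\cdot R(b_2)\otimes R(R(a_3)\rightharpoonup b_3)=S_HR(R(a_2)\rightharpoonup b_2)\cdot R(a_3)\cdot R(b_3)\otimes R(R(a_1)\rightharpoonup b_1)$. It is a Yetter--Drinfeld relative Rota--Baxter operator if moreover $R$ is bijective and (RB3) $\big(a_1\rightharpoonup R^{-1}S_H(a_2)\big)\cdot_K R^{-1}(a_3)=\epsilon(a)1_K$ for all $a\in H$. *)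

theory Defs
  imports Complex_Main
begin

text \<open>
A vector space over a field of type 'a is a type 'v::ab_group_add with a
scalar multiplication s :: 'a => 'v => 'v satisfying vector_space s (HOL Vector_Spaces).

An element of V (x) W is represented by a finite list of pairs (a finite sum of
simple tensors).  Two such lists represent the same tensor iff they pair equally against all
f (x) g with f, g linear functionals (over a field the canonical map
V (x) W -> Bil(V* x W*, k) is injective).
Comultiplications / coactions are list valued maps, i.e. Sweedler notation literally.
\<close>

definition tensor2_eq ::
  "('a::field \<Rightarrow> 'v::ab_group_add \<Rightarrow> 'v) \<Rightarrow> ('a \<Rightarrow> 'w::ab_group_add \<Rightarrow> 'w)
   \<Rightarrow> ('v \<times> 'w) list \<Rightarrow> ('v \<times> 'w) list \<Rightarrow> bool" where
  "tensor2_eq sV sW xs ys \<longleftrightarrow>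
     (\<forall>f g. Vector_Spaces.linear sV times f \<longrightarrow> Vector_Spaces.linear sW times g \<longrightarrow>
        sum_list (map (\<lambda>(x, y). f x * g y) xs) = sum_list (map (\<lambda>(x, y). f x * g y) ys))"

definition tensor3_eq ::
  "('a::field \<Rightarrow> 'u::ab_group_add \<Rightarrow> 'u) \<Rightarrow> ('a \<Rightarrow> 'v::ab_group_add \<Rightarrow> 'v)
   \<Rightarrow> ('a \<Rightarrow> 'w::ab_group_add \<Rightarrow> 'w)
   \<Rightarrow> ('u \<times> 'v \<times> 'w) list \<Rightarrow> ('u \<times> 'v \<times> 'w) list \<Rightarrow> bool" where
  "tensor3_eq sU sV sW xs ys \<longleftrightarrow>
     (\<forall>f g h. Vector_Spaces.linear sU times f \<longrightarrow> Vector_Spaces.linear sV times g \<longrightarrow> Vector_Spaces.linear sW times h \<longrightarrow>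
        sum_list (map (\<lambda>(x, y, z). f x * g y * h z) xs)
        = sum_list (map (\<lambda>(x, y, z). f x * g y * h z) ys))"

definition tensor2_linear ::
  "('a::field \<Rightarrow> 'x::ab_group_add \<Rightarrow> 'x) \<Rightarrow> ('a \<Rightarrow> 'v::ab_group_add \<Rightarrow> 'v)
   \<Rightarrow> ('a \<Rightarrow> 'w::ab_group_add \<Rightarrow> 'w) \<Rightarrow> ('x \<Rightarrow> ('v \<times> 'w) list) \<Rightarrow> bool" where
  "tensor2_linear sX sV sW D \<longleftrightarrow>
     (\<forall>f g. Vector_Spaces.linear sV times f \<longrightarrow> Vector_Spaces.linear sW times g \<longrightarrow>
        Vector_Spaces.linear sX times (\<lambda>x. sum_list (map (\<lambda>(u, v). f u * g v) (D x))))"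

text \<open>Iterated Sweedler notation c1 (x) c2 (x) c3 = (id (x) Delta) Delta c.\<close>
definition sweedler3 :: "('c \<Rightarrow> ('c \<times> 'c) list) \<Rightarrow> 'c \<Rightarrow> ('c \<times> 'c \<times> 'c) list" where
  "sweedler3 \<Delta> c = concat (map (\<lambda>(x, y). map (\<lambda>(y1, y2). (x, y1, y2)) (\<Delta> y)) (\<Delta> c))"

definition sweedler3' :: "('c \<Rightarrow> ('c \<times> 'c) list) \<Rightarrow> 'c \<Rightarrow> ('c \<times> 'c \<times> 'c) list" where
  "sweedler3' \<Delta> c = concat (map (\<lambda>(x, y). map (\<lambda>(x1, x2). (x1, x2, y)) (\<Delta> x)) (\<Delta> c))"

definition is_algebra ::
  "('a::field \<Rightarrow> 'v::ab_group_add \<Rightarrow> 'v) \<Rightarrow> ('v \<Rightarrow> 'v \<Rightarrow> 'v) \<Rightarrow> 'v \<Rightarrow> bool" where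
  "is_algebra s m u \<longleftrightarrow> vector_space s
     \<and> (\<forall>x. Vector_Spaces.linear s s (m x)) \<and> (\<forall>y. Vector_Spaces.linear s s (\<lambda>x. m x y))
     \<and> (\<forall>x y z. m (m x y) z = m x (m y z))
     \<and> (\<forall>x. m u x = x \<and> m x u = x)"

definition is_coalgebra ::
  "('a::field \<Rightarrow> 'v::ab_group_add \<Rightarrow> 'v) \<Rightarrow> ('v \<Rightarrow> ('v \<times> 'v) list) \<Rightarrow> ('v \<Rightarrow> 'a) \<Rightarrow> bool" where
  "is_coalgebra s \<Delta> \<epsilon> \<longleftrightarrow> vector_space s
     \<and> tensor2_linear s s s \<Delta> \<and> Vector_Spaces.linear s times \<epsilon>
     \<and> (\<forall>c. tensor3_eq s s s (sweedler3' \<Delta> c) (sweedler3 \<Delta> c))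
     \<and> (\<forall>c. sum_list (map (\<lambda>(x, y). s (\<epsilon> x) y) (\<Delta> c)) = c)
     \<and> (\<forall>c. sum_list (map (\<lambda>(x, y). s (\<epsilon> y) x) (\<Delta> c)) = c)"

definition is_hopf_algebra ::
  "('a::field \<Rightarrow> 'h::ab_group_add \<Rightarrow> 'h) \<Rightarrow> ('h \<Rightarrow> 'h \<Rightarrow> 'h) \<Rightarrow> 'h
   \<Rightarrow> ('h \<Rightarrow> ('h \<times> 'h) list) \<Rightarrow> ('h \<Rightarrow> 'a) \<Rightarrow> ('h \<Rightarrow> 'h) \<Rightarrow> bool" where
  "is_hopf_algebra s m u \<Delta> \<epsilon> S \<longleftrightarrow>
     is_algebra s m u \<and> is_coalgebra s \<Delta> \<epsilon>
     \<and> (\<forall>x y. tensor2_eq s s (\<Delta> (m x y))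
           (concat (map (\<lambda>(x1, x2). map (\<lambda>(y1, y2). (m x1 y1, m x2 y2)) (\<Delta> y)) (\<Delta> x))))
     \<and> tensor2_eq s s (\<Delta> u) [(u, u)]
     \<and> (\<forall>x y. \<epsilon> (m x y) = \<epsilon> x * \<epsilon> y) \<and> \<epsilon> u = 1
     \<and> Vector_Spaces.linear s s S
     \<and> (\<forall>a. sum_list (map (\<lambda>(x, y). m (S x) y) (\<Delta> a)) = s (\<epsilon> a) u)
     \<and> (\<forall>a. sum_list (map (\<lambda>(x, y). m x (S y)) (\<Delta> a)) = s (\<epsilon> a) u)"

definition is_YD_module ::
  "('a::field \<Rightarrow> 'h::ab_group_add \<Rightarrow> 'h) \<Rightarrow> ('h \<Rightarrow> 'h \<Rightarrow> 'h) \<Rightarrow> 'h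
   \<Rightarrow> ('h \<Rightarrow> ('h \<times> 'h) list) \<Rightarrow> ('h \<Rightarrow> 'a) \<Rightarrow> ('h \<Rightarrow> 'h)
   \<Rightarrow> ('a \<Rightarrow> 'k::ab_group_add \<Rightarrow> 'k) \<Rightarrow> ('h \<Rightarrow> 'k \<Rightarrow> 'k) \<Rightarrow> ('k \<Rightarrow> ('h \<times> 'k) list) \<Rightarrow> bool" where
  "is_YD_module sH mH uH \<Delta>H \<epsilon>H SH sK act \<rho> \<longleftrightarrow>
     vector_space sK
     \<and> (\<forall>h. Vector_Spaces.linear sK sK (act h)) \<and> (\<forall>v. Vector_Spaces.linear sH sK (\<lambda>h. act h v))
     \<and> (\<forall>v. act uH v = v) \<and> (\<forall>a b v. act (mH a b) v = act a (act b v))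
     \<and> tensor2_linear sK sH sK \<rho>
     \<and> (\<forall>w. tensor3_eq sH sH sK
           (concat (map (\<lambda>(h, v). map (\<lambda>(h1, h2). (h1, h2, v)) (\<Delta>H h)) (\<rho> w)))
           (concat (map (\<lambda>(h, v). map (\<lambda>(g, v'). (h, g, v')) (\<rho> v)) (\<rho> w))))
     \<and> (\<forall>w. sum_list (map (\<lambda>(h, v). sK (\<epsilon>H h) v) (\<rho> w)) = w)
     \<and> (\<forall>a v. tensor2_eq sH sK (\<rho> (act a v))
           (concat (map (\<lambda>(a1, a2, a3). map (\<lambda>(h, v0). (mH (mH a1 h) (SH a3), act a2 v0)) (\<rho> v))
              (sweedler3 \<Delta>H a))))"

text \<open>(K, mK, 1K, DeltaK, epsK) is a bimonoid in the braided category of left-left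
Yetter-Drinfeld modules over H (all structure maps are YD morphisms; the tensor product of
YD modules carries the diagonal action and codiagonal coaction; the braiding is
sigma(v (x) w) = v_{-1} act w (x) v_0).\<close>
definition is_YD_bimonoid ::
  "('a::field \<Rightarrow> 'h::ab_group_add \<Rightarrow> 'h) \<Rightarrow> ('h \<Rightarrow> 'h \<Rightarrow> 'h) \<Rightarrow> 'h
   \<Rightarrow> ('h \<Rightarrow> ('h \<times> 'h) list) \<Rightarrow> ('h \<Rightarrow> 'a) \<Rightarrow> ('h \<Rightarrow> 'h)
   \<Rightarrow> ('a \<Rightarrow> 'k::ab_group_add \<Rightarrow> 'k) \<Rightarrow> ('h \<Rightarrow> 'k \<Rightarrow> 'k) \<Rightarrow> ('k \<Rightarrow> ('h \<times> 'k) list)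
   \<Rightarrow> ('k \<Rightarrow> 'k \<Rightarrow> 'k) \<Rightarrow> 'k \<Rightarrow> ('k \<Rightarrow> ('k \<times> 'k) list) \<Rightarrow> ('k \<Rightarrow> 'a) \<Rightarrow> bool" where
  "is_YD_bimonoid sH mH uH \<Delta>H \<epsilon>H SH sK act \<rho> mK uK \<Delta>K \<epsilon>K \<longleftrightarrow>
     is_YD_module sH mH uH \<Delta>H \<epsilon>H SH sK act \<rho>
     \<and> is_algebra sK mK uK \<and> is_coalgebra sK \<Delta>K \<epsilon>K
     \<comment> \<open>multiplication is a YD morphism\<close>
     \<and> (\<forall>h a b. act h (mK a b) = sum_list (map (\<lambda>(h1, h2). mK (act h1 a) (act h2 b)) (\<Delta>H h)))
     \<and> (\<forall>a b. tensor2_eq sH sK (\<rho> (mK a b))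
           (concat (map (\<lambda>(g, a0). map (\<lambda>(h, b0). (mH g h, mK a0 b0)) (\<rho> b)) (\<rho> a))))
     \<comment> \<open>unit is a YD morphism\<close>
     \<and> (\<forall>h. act h uK = sK (\<epsilon>H h) uK) \<and> tensor2_eq sH sK (\<rho> uK) [(uH, uK)]
     \<comment> \<open>comultiplication is a YD morphism\<close>
     \<and> (\<forall>h a. tensor2_eq sK sK (\<Delta>K (act h a))
           (concat (map (\<lambda>(h1, h2). map (\<lambda>(a1, a2). (act h1 a1, act h2 a2)) (\<Delta>K a)) (\<Delta>H h))))
     \<and> (\<forall>a. tensor3_eq sH sK sK
           (concat (map (\<lambda>(g, v). map (\<lambda>(v1, v2). (g, v1, v2)) (\<Delta>K v)) (\<rho> a)))
           (concat (map (\<lambda>(x, y). concat (map (\<lambda>(g, x0). map (\<lambda>(h, y0). (mH g h, x0, y0)) (\<rho> y)) (\<rho> x)))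
              (\<Delta>K a))))
     \<comment> \<open>counit is a YD morphism\<close>
     \<and> (\<forall>h a. \<epsilon>K (act h a) = \<epsilon>H h * \<epsilon>K a)
     \<and> (\<forall>a. sum_list (map (\<lambda>(g, v). sH (\<epsilon>K v) g) (\<rho> a)) = sH (\<epsilon>K a) uH)
     \<comment> \<open>bimonoid axioms\<close>
     \<and> (\<forall>a b. \<epsilon>K (mK a b) = \<epsilon>K a * \<epsilon>K b) \<and> \<epsilon>K uK = 1
     \<and> tensor2_eq sK sK (\<Delta>K uK) [(uK, uK)]
     \<and> (\<forall>a b. tensor2_eq sK sK (\<Delta>K (mK a b))
           (concat (map (\<lambda>(a1, a2). concat (map (\<lambda>(g, a20). map (\<lambda>(b1, b2).
               (mK a1 (act g b1), mK a20 b2)) (\<Delta>K b)) (\<rho> a2))) (\<Delta>K a))))"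

definition is_YD_hopf_monoid ::
  "('a::field \<Rightarrow> 'h::ab_group_add \<Rightarrow> 'h) \<Rightarrow> ('h \<Rightarrow> 'h \<Rightarrow> 'h) \<Rightarrow> 'h
   \<Rightarrow> ('h \<Rightarrow> ('h \<times> 'h) list) \<Rightarrow> ('h \<Rightarrow> 'a) \<Rightarrow> ('h \<Rightarrow> 'h)
   \<Rightarrow> ('a \<Rightarrow> 'k::ab_group_add \<Rightarrow> 'k) \<Rightarrow> ('h \<Rightarrow> 'k \<Rightarrow> 'k) \<Rightarrow> ('k \<Rightarrow> ('h \<times> 'k) list)
   \<Rightarrow> ('k \<Rightarrow> 'k \<Rightarrow> 'k) \<Rightarrow> 'k \<Rightarrow> ('k \<Rightarrow> ('k \<times> 'k) list) \<Rightarrow> ('k \<Rightarrow> 'a) \<Rightarrow> ('k \<Rightarrow> 'k) \<Rightarrow> bool" where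
  "is_YD_hopf_monoid sH mH uH \<Delta>H \<epsilon>H SH sK act \<rho> mK uK \<Delta>K \<epsilon>K SK \<longleftrightarrow>
     is_YD_bimonoid sH mH uH \<Delta>H \<epsilon>H SH sK act \<rho> mK uK \<Delta>K \<epsilon>K
     \<and> Vector_Spaces.linear sK sK SK
     \<and> (\<forall>a. sum_list (map (\<lambda>(x, y). mK (SK x) y) (\<Delta>K a)) = sK (\<epsilon>K a) uK)
     \<and> (\<forall>a. sum_list (map (\<lambda>(x, y). mK x (SK y)) (\<Delta>K a)) = sK (\<epsilon>K a) uK)"

definition is_YD_rel_RB ::
  "('a::field \<Rightarrow> 'h::ab_group_add \<Rightarrow> 'h) \<Rightarrow> ('h \<Rightarrow> 'h \<Rightarrow> 'h) \<Rightarrow> 'h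
   \<Rightarrow> ('h \<Rightarrow> ('h \<times> 'h) list) \<Rightarrow> ('h \<Rightarrow> 'a) \<Rightarrow> ('h \<Rightarrow> 'h)
   \<Rightarrow> ('a \<Rightarrow> 'k::ab_group_add \<Rightarrow> 'k) \<Rightarrow> ('h \<Rightarrow> 'k \<Rightarrow> 'k) \<Rightarrow> ('k \<Rightarrow> ('h \<times> 'k) list)
   \<Rightarrow> ('k \<Rightarrow> 'k \<Rightarrow> 'k) \<Rightarrow> 'k \<Rightarrow> ('k \<Rightarrow> ('k \<times> 'k) list) \<Rightarrow> ('k \<Rightarrow> 'a) \<Rightarrow> ('k \<Rightarrow> 'h) \<Rightarrow> bool" where
  "is_YD_rel_RB sH mH uH \<Delta>H \<epsilon>H SH sK act \<rho> mK uK \<Delta>K \<epsilon>K R \<longleftrightarrow>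
     is_hopf_algebra sH mH uH \<Delta>H \<epsilon>H SH
     \<and> is_YD_bimonoid sH mH uH \<Delta>H \<epsilon>H SH sK act \<rho> mK uK \<Delta>K \<epsilon>K
     \<comment> \<open>R is a coalgebra morphism\<close>
     \<and> Vector_Spaces.linear sK sH R
     \<and> (\<forall>a. tensor2_eq sH sH (\<Delta>H (R a)) (map (\<lambda>(x, y). (R x, R y)) (\<Delta>K a)))
     \<and> (\<forall>a. \<epsilon>H (R a) = \<epsilon>K a)
     \<comment> \<open>(RB1)\<close>
     \<and> (\<forall>a b. mH (R a) (R b) = R (sum_list (map (\<lambda>(a1, a2). mK a1 (act (R a2) b)) (\<Delta>K a))))
     \<comment> \<open>(RB2)\<close>
     \<and> (\<forall>a b. tensor2_eq sH sH
          (concat (map (\<lambda>(a1, a2, a3). map (\<lambda>(b1, b2, b3).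
              (mH (mH (SH (R (act (R a1) b1))) (R a2)) (R b2), R (act (R a3) b3)))
              (sweedler3 \<Delta>K b)) (sweedler3 \<Delta>K a)))
          (concat (map (\<lambda>(a1, a2, a3). map (\<lambda>(b1, b2, b3).
              (mH (mH (SH (R (act (R a2) b2))) (R a3)) (R b3), R (act (R a1) b1)))
              (sweedler3 \<Delta>K b)) (sweedler3 \<Delta>K a))))
     \<comment> \<open>bijectivity and (RB3)\<close>
     \<and> bij R
     \<and> (\<forall>a. sum_list (map (\<lambda>(a1, a2, a3). mK (act a1 (inv R (SH a2))) (inv R a3))
              (sweedler3 \<Delta>H a)) = sK (\<epsilon>H a) uK)"

definition SK_of ::
  "('h \<Rightarrow> 'h) \<Rightarrow> ('h \<Rightarrow> 'k::ab_group_add \<Rightarrow> 'k) \<Rightarrow> ('k \<Rightarrow> ('k \<times> 'k) list) \<Rightarrow> ('k \<Rightarrow> 'h) \<Rightarrow> 'k \<Rightarrow> 'k" where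
  "SK_of SH act \<Delta>K R a = sum_list (map (\<lambda>(x, y). act (R x) (inv R (SH (R y)))) (\<Delta>K a))"

end

theory Submission
  imports Defs
begin

text \<open>
By coassociativity \<open>S\<^sub>K(a\<^sub>1) a\<^sub>2 = R(a\<^sub>1) \<rightharpoonup> R\<^sup>-\<^sup>1 S\<^sub>H R(a\<^sub>2) \<cdot> R\<^sup>-\<^sup>1 R(a\<^sub>3)\<close>; as \<open>R\<close> is a
coalgebra map, \<open>R(a\<^sub>1) \<otimes> R(a\<^sub>2) \<otimes> R(a\<^sub>3) = \<Delta>\<^sup>2 R(a)\<close>, so (RB3) at \<open>R(a)\<close> gives the left
antipode identity. For the right one, (RB1) turns \<open>R(a\<^sub>1 S\<^sub>K(a\<^sub>2))\<close> into
\<open>R(a\<^sub>1) S\<^sub>H R(a\<^sub>2) = \<epsilon>(a) 1\<^sub>H = R(\<epsilon>(a) 1\<^sub>K)\<close>, and \<open>R\<close> is injective.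

Tensors are lists of simple tensors compared through linear functionals, so the technical core
is that multilinear maps respect this equality; it holds because functionals separate points
(every vector space has a basis).
\<close>

text \<open>Linearity without the vector space axioms on both sides that \<open>Vector_Spaces.linear\<close> carries.\<close>

definition lin :: "('a::field \<Rightarrow> 'b::ab_group_add \<Rightarrow> 'b) \<Rightarrow> ('a \<Rightarrow> 'c::ab_group_add \<Rightarrow> 'c) \<Rightarrow> ('b \<Rightarrow> 'c) \<Rightarrow> bool" where
  "lin s1 s2 f \<longleftrightarrow> (\<forall>x y. f (x + y) = f x + f y) \<and> (\<forall>c x. f (s1 c x) = s2 c (f x))"

lemma vector_space_times: "vector_space ((*) :: 'a::field \<Rightarrow> 'a \<Rightarrow> 'a)"
  by unfold_locales (auto simp: algebra_simps)

lemma linear_iff_lin: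
  "Vector_Spaces.linear s1 s2 f \<longleftrightarrow> vector_space s1 \<and> vector_space s2 \<and> lin s1 s2 f"
  unfolding linear_iff_module_hom module_hom_iff module_iff_vector_space lin_def by auto

lemma lin_add: "lin s1 s2 f \<Longrightarrow> f (x + y) = f x + f y"
  by (simp add: lin_def)

lemma lin_scale: "lin s1 s2 f \<Longrightarrow> f (s1 c x) = s2 c (f x)"
  by (simp add: lin_def)

lemma lin_zero: "lin s1 s2 f \<Longrightarrow> f 0 = 0"
  using lin_add[of s1 s2 f 0 0] by simp

lemma lin_minus: "lin s1 s2 f \<Longrightarrow> f (- x) = - f x"
  using lin_add[of s1 s2 f x "- x"] lin_zero[of s1 s2 f] by (simp add: eq_neg_iff_add_eq_0 add.commute)

lemma lin_sum_list: "lin s1 s2 f \<Longrightarrow> f (sum_list (map g xs)) = sum_list (map (\<lambda>x. f (g x)) xs)"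
  by (induction xs) (auto simp: lin_zero lin_add)

lemma lin_sum: "lin s1 s2 f \<Longrightarrow> f (sum g A) = (\<Sum>x\<in>A. f (g x))"
  by (induction A rule: infinite_finite_induct) (auto simp: lin_zero lin_add)

lemma lin_comp: "lin s1 s2 f \<Longrightarrow> lin s2 s3 g \<Longrightarrow> lin s1 s3 (\<lambda>x. g (f x))"
  by (simp add: lin_def)

lemma lin_inv:
  assumes f: "lin s1 s2 f" and "bij f"
  shows "lin s2 s1 (inv f)"
proof -
  have f_inv: "f (inv f y) = y" for y
    using \<open>bij f\<close> by (simp add: bij_is_surj surj_f_inv_f)
  have inv_f: "inv f (f x) = x" for x
    using \<open>bij f\<close> by (simp add: bij_is_inj)
  have "inv f (y + z) = inv f (f (inv f y + inv f z))" for y z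
    by (simp add: lin_add[OF f] f_inv)
  moreover have "inv f (s2 c y) = inv f (f (s1 c (inv f y)))" for c y
    by (simp add: lin_scale[OF f] f_inv)
  ultimately show ?thesis
    by (simp add: lin_def inv_f)
qed

lemma scale_sum_list:
  assumes "vector_space s"
  shows "s c (sum_list (map g xs)) = sum_list (map (\<lambda>x. s c (g x)) xs)"
proof -
  interpret vector_space s by fact
  show ?thesis
    by (induction xs) (auto simp: scale_right_distrib)
qed

lemma sum_list_sum_swap:
  "sum_list (map (\<lambda>x. \<Sum>b\<in>F. g b x) xs) = (\<Sum>b\<in>F. sum_list (map (g b) xs))"
  by (induction xs) (auto simp: sum.distrib)

lemma sum_list_map_concat:
  "sum_list (map f (concat (map g xs))) = sum_list (map (\<lambda>x. sum_list (map f (g x))) xs)"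
  by (induction xs) auto

lemma sum_list_map_uminus:
  "sum_list (map (\<lambda>x. - f x) xs) = - sum_list (map f xs :: 'b::ab_group_add list)"
  by (induction xs) auto


lemma obtain_coordinates:
  assumes "vector_space s"
  obtains r where "\<And>b. lin s (*) (\<lambda>v. r v b)" and "\<And>v. finite {b. r v b \<noteq> 0}"
    and "\<And>v F. finite F \<Longrightarrow> {b. r v b \<noteq> 0} \<subseteq> F \<Longrightarrow> v = (\<Sum>b\<in>F. s (r v b) b)"
proof -
  interpret vector_space s by fact
  define B where "B = extend_basis {}"
  have indep: "independent B" and spanning: "span B = UNIV"
    unfolding B_def using independent_extend_basis[of "{}"] span_extend_basis[of "{}"] independent_empty by auto
  define r where "r v b = representation B v b" for v b
  have r_lin: "lin s (*) (\<lambda>v. r v b)" for b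
    using linear_representation[OF indep spanning, of b] by (simp add: linear_iff_lin r_def)
  have r_finite: "finite {b. r v b \<noteq> 0}" for v
    by (simp add: r_def finite_representation)
  have r_expand: "v = (\<Sum>b\<in>F. s (r v b) b)" if "finite F" "{b. r v b \<noteq> 0} \<subseteq> F" for v F
  proof -
    have "v = (\<Sum>b | r v b \<noteq> 0. s (r v b) b)"
      using sum_nonzero_representation_eq[OF indep, of v] spanning by (simp add: r_def)
    also have "\<dots> = (\<Sum>b\<in>F. s (r v b) b)"
      using that by (intro sum.mono_neutral_left) auto
    finally show ?thesis .
  qed
  show ?thesis
    using that r_lin r_finite r_expand by blast
qed

lemma eq_0_if_functionals_vanish:
  assumes "vector_space s" and "\<And>f. lin s (*) f \<Longrightarrow> f v = 0"
  shows "v = 0"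
proof -
  obtain r where r_lin: "\<And>b. lin s (*) (\<lambda>v. r v b)"
    and r_expand: "\<And>v F. finite F \<Longrightarrow> {b. r v b \<noteq> 0} \<subseteq> F \<Longrightarrow> v = (\<Sum>b\<in>F. s (r v b) b)"
    by (rule obtain_coordinates[OF assms(1)]) blast
  have "{b. r v b \<noteq> 0} \<subseteq> {}"
    using assms(2)[OF r_lin] by auto
  from r_expand[OF _ this] show ?thesis
    by simp
qed

text \<open>
Expanding the first tensor factor in a basis reduces a bilinear (trilinear) map applied to a
tensor to linear functionals (bilinear maps) applied to the remaining factors.
\<close>

lemma bilinear_sum_list_eq_0:
  assumes vV: "vector_space sV" and vW: "vector_space sW"
    and \<beta>1: "\<And>x. lin sW sU (\<beta> x)" and \<beta>2: "\<And>y. lin sV sU (\<lambda>x. \<beta> x y)"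
    and vanish: "\<And>f g. lin sV (*) f \<Longrightarrow> lin sW (*) g \<Longrightarrow> sum_list (map (\<lambda>(x, y). f x * g y) xs) = 0"
  shows "sum_list (map (\<lambda>(x, y). \<beta> x y) xs) = 0"
proof -
  obtain r where r_lin: "\<And>b. lin sV (*) (\<lambda>v. r v b)" and r_finite: "\<And>v. finite {b. r v b \<noteq> 0}"
    and r_expand: "\<And>v F. finite F \<Longrightarrow> {b. r v b \<noteq> 0} \<subseteq> F \<Longrightarrow> v = (\<Sum>b\<in>F. sV (r v b) b)"
    by (rule obtain_coordinates[OF vV]) blast
  define F where "F = (\<Union>p\<in>set xs. {b. r (fst p) b \<noteq> 0})"
  have "finite F"
    using r_finite by (auto simp: F_def)
  have "\<beta> x y = (\<Sum>b\<in>F. \<beta> b (sW (r x b) y))" if "(x, y) \<in> set xs" for x y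
  proof -
    have "x = (\<Sum>b\<in>F. sV (r x b) b)"
      using that \<open>finite F\<close> by (intro r_expand) (auto simp: F_def intro!: bexI[OF _ that])
    then have "\<beta> x y = (\<Sum>b\<in>F. \<beta> (sV (r x b) b) y)"
      by (metis lin_sum[OF \<beta>2])
    then show ?thesis
      by (simp add: lin_scale[OF \<beta>1] lin_scale[OF \<beta>2])
  qed
  then have "sum_list (map (\<lambda>(x, y). \<beta> x y) xs)
      = sum_list (map (\<lambda>p. \<Sum>b\<in>F. \<beta> b (sW (r (fst p) b) (snd p))) xs)"
    by (intro arg_cong[where f = sum_list] map_cong) auto
  also have "\<dots> = (\<Sum>b\<in>F. \<beta> b (sum_list (map (\<lambda>p. sW (r (fst p) b) (snd p)) xs)))"
    by (simp add: sum_list_sum_swap lin_sum_list[OF \<beta>1])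
  also have "\<dots> = 0"
  proof (intro sum.neutral ballI)
    fix b
    have "sum_list (map (\<lambda>p. sW (r (fst p) b) (snd p)) xs) = 0"
    proof (rule eq_0_if_functionals_vanish[OF vW])
      fix g
      assume g: "lin sW (*) g"
      have "g (sum_list (map (\<lambda>p. sW (r (fst p) b) (snd p)) xs)) = sum_list (map (\<lambda>(x, y). r x b * g y) xs)"
        by (simp add: lin_sum_list[OF g] lin_scale[OF g] split_def)
      also have "\<dots> = 0"
        by (rule vanish[OF r_lin g])
      finally show "g (sum_list (map (\<lambda>p. sW (r (fst p) b) (snd p)) xs)) = 0" .
    qed
    then show "\<beta> b (sum_list (map (\<lambda>p. sW (r (fst p) b) (snd p)) xs)) = 0"
      by (simp add: lin_zero[OF \<beta>1])
  qed
  finally show ?thesis .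
qed

lemma bilinear_tensor2_eq:
  assumes vV: "vector_space sV" and vW: "vector_space sW"
    and \<beta>1: "\<And>x. lin sW sU (\<beta> x)" and \<beta>2: "\<And>y. lin sV sU (\<lambda>x. \<beta> x y)"
    and "tensor2_eq sV sW xs ys"
  shows "sum_list (map (\<lambda>(x, y). \<beta> x y) xs) = sum_list (map (\<lambda>(x, y). \<beta> x y) ys)"
proof -
  let ?zs = "xs @ map (\<lambda>(x, y). (- x, y)) ys"
  have "sum_list (map (\<lambda>(x, y). \<beta> x y) ?zs) = 0"
  proof (rule bilinear_sum_list_eq_0[OF vV vW \<beta>1 \<beta>2])
    fix f g
    assume f: "lin sV (*) f" and g: "lin sW (*) g"
    have "sum_list (map (\<lambda>(x, y). f x * g y) xs) = sum_list (map (\<lambda>(x, y). f x * g y) ys)"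
      using assms(5) f g vV vW vector_space_times unfolding tensor2_eq_def linear_iff_lin by blast
    then show "sum_list (map (\<lambda>(x, y). f x * g y) ?zs) = 0"
      by (simp add: split_def o_def lin_minus[OF f] sum_list_map_uminus)
  qed
  then show ?thesis
    by (simp add: split_def o_def lin_minus[OF \<beta>2] sum_list_map_uminus)
qed

lemma trilinear_sum_list_eq_0:
  assumes vU: "vector_space sU" and vV: "vector_space sV" and vW: "vector_space sW"
    and \<gamma>1: "\<And>y z. lin sU sX (\<lambda>x. \<gamma> x y z)" and \<gamma>2: "\<And>x z. lin sV sX (\<lambda>y. \<gamma> x y z)"
    and \<gamma>3: "\<And>x y. lin sW sX (\<gamma> x y)"
    and vanish: "\<And>f g h. lin sU (*) f \<Longrightarrow> lin sV (*) g \<Longrightarrow> lin sW (*) h \<Longrightarrow>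
              sum_list (map (\<lambda>(x, y, z). f x * g y * h z) xs) = 0"
  shows "sum_list (map (\<lambda>(x, y, z). \<gamma> x y z) xs) = 0"
proof -
  obtain r where r_lin: "\<And>b. lin sU (*) (\<lambda>v. r v b)" and r_finite: "\<And>v. finite {b. r v b \<noteq> 0}"
    and r_expand: "\<And>v F. finite F \<Longrightarrow> {b. r v b \<noteq> 0} \<subseteq> F \<Longrightarrow> v = (\<Sum>b\<in>F. sU (r v b) b)"
    by (rule obtain_coordinates[OF vU]) blast
  define F where "F = (\<Union>p\<in>set xs. {b. r (fst p) b \<noteq> 0})"
  have "finite F"
    using r_finite by (auto simp: F_def)
  have "\<gamma> x y z = (\<Sum>b\<in>F. \<gamma> b (sV (r x b) y) z)" if "(x, y, z) \<in> set xs" for x y z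
  proof -
    have "x = (\<Sum>b\<in>F. sU (r x b) b)"
      using that \<open>finite F\<close> by (intro r_expand) (auto simp: F_def intro!: bexI[OF _ that])
    then have "\<gamma> x y z = (\<Sum>b\<in>F. \<gamma> (sU (r x b) b) y z)"
      by (metis lin_sum[OF \<gamma>1])
    then show ?thesis
      by (simp add: lin_scale[OF \<gamma>1] lin_scale[OF \<gamma>2])
  qed
  then have "sum_list (map (\<lambda>(x, y, z). \<gamma> x y z) xs)
      = sum_list (map (\<lambda>p. \<Sum>b\<in>F. \<gamma> b (sV (r (fst p) b) (fst (snd p))) (snd (snd p))) xs)"
    by (intro arg_cong[where f = sum_list] map_cong) auto
  also have "\<dots> = (\<Sum>b\<in>F. sum_list (map (\<lambda>(y, z). \<gamma> b y z)
                      (map (\<lambda>p. (sV (r (fst p) b) (fst (snd p)), snd (snd p))) xs)))"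
    by (simp add: sum_list_sum_swap split_def o_def)
  also have "\<dots> = 0"
  proof (intro sum.neutral ballI bilinear_sum_list_eq_0[OF vV vW \<gamma>3 \<gamma>2])
    fix b g h
    assume g: "lin sV (*) g" and h: "lin sW (*) h"
    have "sum_list (map (\<lambda>(y, z). g y * h z) (map (\<lambda>p. (sV (r (fst p) b) (fst (snd p)), snd (snd p))) xs))
        = sum_list (map (\<lambda>(x, y, z). r x b * g y * h z) xs)"
      by (simp add: split_def o_def lin_scale[OF g])
    also have "\<dots> = 0"
      by (rule vanish[OF r_lin g h])
    finally show "sum_list (map (\<lambda>(y, z). g y * h z)
        (map (\<lambda>p. (sV (r (fst p) b) (fst (snd p)), snd (snd p))) xs)) = 0" .
  qed
  finally show ?thesis .
qed

lemma trilinear_tensor3_eq: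
  assumes vU: "vector_space sU" and vV: "vector_space sV" and vW: "vector_space sW"
    and \<gamma>1: "\<And>y z. lin sU sX (\<lambda>x. \<gamma> x y z)" and \<gamma>2: "\<And>x z. lin sV sX (\<lambda>y. \<gamma> x y z)"
    and \<gamma>3: "\<And>x y. lin sW sX (\<gamma> x y)"
    and "tensor3_eq sU sV sW xs ys"
  shows "sum_list (map (\<lambda>(x, y, z). \<gamma> x y z) xs) = sum_list (map (\<lambda>(x, y, z). \<gamma> x y z) ys)"
proof -
  let ?zs = "xs @ map (\<lambda>(x, y, z). (- x, y, z)) ys"
  have "sum_list (map (\<lambda>(x, y, z). \<gamma> x y z) ?zs) = 0"
  proof (rule trilinear_sum_list_eq_0[OF vU vV vW \<gamma>1 \<gamma>2 \<gamma>3])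
    fix f g h
    assume f: "lin sU (*) f" and g: "lin sV (*) g" and h: "lin sW (*) h"
    have "sum_list (map (\<lambda>(x, y, z). f x * g y * h z) xs) = sum_list (map (\<lambda>(x, y, z). f x * g y * h z) ys)"
      using assms(7) f g h vU vV vW vector_space_times unfolding tensor3_eq_def linear_iff_lin by blast
    then show "sum_list (map (\<lambda>(x, y, z). f x * g y * h z) ?zs) = 0"
      by (simp add: split_def o_def lin_minus[OF f] sum_list_map_uminus)
  qed
  then show ?thesis
    by (simp add: split_def o_def lin_minus[OF \<gamma>1] sum_list_map_uminus)
qed

lemma lin_bilinear_tensor2_linear:
  assumes vV: "vector_space sV" and vW: "vector_space sW" and vU: "vector_space sU"
    and \<beta>1: "\<And>x. lin sW sU (\<beta> x)" and \<beta>2: "\<And>y. lin sV sU (\<lambda>x. \<beta> x y)"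
    and D: "tensor2_linear sX sV sW D"
  shows "lin sX sU (\<lambda>a. sum_list (map (\<lambda>(x, y). \<beta> x y) (D a)))"
proof -
  have D_lin: "lin sX (*) (\<lambda>a. sum_list (map (\<lambda>(u, v). f u * g v) (D a)))"
    if "lin sV (*) f" "lin sW (*) g" for f g
    using D that vV vW vector_space_times unfolding tensor2_linear_def linear_iff_lin by blast
  have add: "tensor2_eq sV sW (D (a + b)) (D a @ D b)" for a b
    unfolding tensor2_eq_def linear_iff_lin using lin_add[OF D_lin] by auto
  have scale: "tensor2_eq sV sW (D (sX c a)) (map (\<lambda>(x, y). (sV c x, y)) (D a))" for c a
    unfolding tensor2_eq_def linear_iff_lin using lin_scale[OF D_lin]
    by (auto simp: split_def o_def lin_scale sum_list_const_mult mult.assoc)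
  show ?thesis
    unfolding lin_def
  proof (intro conjI allI)
    fix a b
    show "sum_list (map (\<lambda>(x, y). \<beta> x y) (D (a + b)))
        = sum_list (map (\<lambda>(x, y). \<beta> x y) (D a)) + sum_list (map (\<lambda>(x, y). \<beta> x y) (D b))"
      using bilinear_tensor2_eq[OF vV vW \<beta>1 \<beta>2 add[of a b]] by simp
  next
    fix c a
    show "sum_list (map (\<lambda>(x, y). \<beta> x y) (D (sX c a))) = sU c (sum_list (map (\<lambda>(x, y). \<beta> x y) (D a)))"
      using bilinear_tensor2_eq[OF vV vW \<beta>1 \<beta>2 scale[of c a]]
      by (simp add: split_def o_def lin_scale[OF \<beta>2] scale_sum_list[OF vU])
  qed
qed

lemma tensor3_eq_sweedler3_hom:
  assumes vW: "vector_space sW" and \<phi>: "lin sV sW \<phi>"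
    and D: "tensor2_linear sW sW sW \<Delta>W"
    and hom: "\<And>v. tensor2_eq sW sW (\<Delta>W (\<phi> v)) (map (\<lambda>(x, y). (\<phi> x, \<phi> y)) (\<Delta>V v))"
  shows "tensor3_eq sW sW sW (sweedler3 \<Delta>W (\<phi> v)) (map (\<lambda>(x, y, z). (\<phi> x, \<phi> y, \<phi> z)) (sweedler3 \<Delta>V v))"
  unfolding tensor3_eq_def
proof (intro allI impI)
  fix f g h
  assume "Vector_Spaces.linear sW (*) f" "Vector_Spaces.linear sW (*) g" "Vector_Spaces.linear sW (*) h"
  then have f: "lin sW (*) f" and g: "lin sW (*) g" and h: "lin sW (*) h"
    by (simp_all add: linear_iff_lin)
  define \<Phi> where "\<Phi> w = sum_list (map (\<lambda>(y, z). g y * h z) (\<Delta>W w))" for w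
  have \<Phi>: "lin sW (*) \<Phi>"
    using D g h vW vector_space_times unfolding tensor2_linear_def linear_iff_lin \<Phi>_def[abs_def] by blast
  have \<Phi>_hom: "\<Phi> (\<phi> w) = sum_list (map (\<lambda>(y, z). g (\<phi> y) * h (\<phi> z)) (\<Delta>V w))" for w
  proof -
    have "\<Phi> (\<phi> w) = sum_list (map (\<lambda>(y, z). g y * h z) (map (\<lambda>(x, y). (\<phi> x, \<phi> y)) (\<Delta>V w)))"
      using hom[of w] g h vW vector_space_times unfolding tensor2_eq_def linear_iff_lin \<Phi>_def by blast
    then show ?thesis
      by (simp add: split_def o_def)
  qed
  have \<beta>1: "lin sW (*) (\<lambda>w. f x * \<Phi> w)" for x
    using \<Phi> by (simp add: lin_def distrib_left mult.left_commute)
  have \<beta>2: "lin sW (*) (\<lambda>x. f x * \<Phi> w)" for w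
    using f by (simp add: lin_def distrib_right mult.assoc)
  have "sum_list (map (\<lambda>(x, y, z). f x * g y * h z) (sweedler3 \<Delta>W (\<phi> v)))
      = sum_list (map (\<lambda>(x, w). f x * \<Phi> w) (\<Delta>W (\<phi> v)))"
    by (simp add: sweedler3_def sum_list_map_concat \<Phi>_def split_def o_def sum_list_const_mult mult.assoc)
  also have "\<dots> = sum_list (map (\<lambda>(x, w). f (\<phi> x) * \<Phi> (\<phi> w)) (\<Delta>V v))"
    using bilinear_tensor2_eq[OF vW vW \<beta>1 \<beta>2 hom[of v]]
    by (simp add: split_def o_def)
  also have "\<dots> = sum_list (map (\<lambda>(x, y, z). f x * g y * h z)
                    (map (\<lambda>(x, y, z). (\<phi> x, \<phi> y, \<phi> z)) (sweedler3 \<Delta>V v)))"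
    by (simp add: sweedler3_def sum_list_map_concat \<Phi>_hom split_def o_def sum_list_const_mult mult.assoc)
  finally show "sum_list (map (\<lambda>(x, y, z). f x * g y * h z) (sweedler3 \<Delta>W (\<phi> v)))
      = sum_list (map (\<lambda>(x, y, z). f x * g y * h z) (map (\<lambda>(x, y, z). (\<phi> x, \<phi> y, \<phi> z)) (sweedler3 \<Delta>V v)))" .
qed


locale YD_rel_RB_operator =
  fixes sH :: "'a::field \<Rightarrow> 'h::ab_group_add \<Rightarrow> 'h" and sK :: "'a \<Rightarrow> 'k::ab_group_add \<Rightarrow> 'k"
    and mH uH \<Delta>H \<epsilon>H SH act \<rho> mK uK \<Delta>K \<epsilon>K R
  assumes RB_operator: "is_YD_rel_RB sH mH uH \<Delta>H \<epsilon>H SH sK act \<rho> mK uK \<Delta>K \<epsilon>K R"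
begin

abbreviation SK :: "'k \<Rightarrow> 'k" where
  "SK \<equiv> SK_of SH act \<Delta>K R"

lemma
  shows hopf_H: "is_hopf_algebra sH mH uH \<Delta>H \<epsilon>H SH"
    and bimonoid_K: "is_YD_bimonoid sH mH uH \<Delta>H \<epsilon>H SH sK act \<rho> mK uK \<Delta>K \<epsilon>K"
    and linear_R: "Vector_Spaces.linear sK sH R"
    and comult_R: "tensor2_eq sH sH (\<Delta>H (R a)) (map (\<lambda>(x, y). (R x, R y)) (\<Delta>K a))"
    and counit_R: "\<epsilon>H (R a) = \<epsilon>K a"
    and RB1: "mH (R a) (R b) = R (sum_list (map (\<lambda>(a1, a2). mK a1 (act (R a2) b)) (\<Delta>K a)))"
    and bij_R: "bij R"
    and RB3: "sum_list (map (\<lambda>(h1, h2, h3). mK (act h1 (inv R (SH h2))) (inv R h3)) (sweedler3 \<Delta>H h))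
        = sK (\<epsilon>H h) uK"
  using RB_operator unfolding is_YD_rel_RB_def by blast+

lemma
  shows vector_space_H: "vector_space sH"
    and lin_mH_right: "lin sH sH (mH x)" and lin_mH_left: "lin sH sH (\<lambda>x. mH x y)"
    and mH_assoc: "mH (mH x y) z = mH x (mH y z)" and mH_unit_left: "mH uH x = x"
    and tensor2_linear_\<Delta>H: "tensor2_linear sH sH sH \<Delta>H"
    and lin_SH: "lin sH sH SH"
    and antipode_H_left: "sum_list (map (\<lambda>(x, y). mH (SH x) y) (\<Delta>H h)) = sH (\<epsilon>H h) uH"
    and antipode_H_right: "sum_list (map (\<lambda>(x, y). mH x (SH y)) (\<Delta>H h)) = sH (\<epsilon>H h) uH"
  using hopf_H
  unfolding is_hopf_algebra_def is_algebra_def is_coalgebra_def linear_iff_lin by blast+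

lemma
  shows YD_module_K: "is_YD_module sH mH uH \<Delta>H \<epsilon>H SH sK act \<rho>"
    and algebra_K: "is_algebra sK mK uK" and coalgebra_K: "is_coalgebra sK \<Delta>K \<epsilon>K"
    and act_unit: "act h uK = sK (\<epsilon>H h) uK"
    and comult_unit_K: "tensor2_eq sK sK (\<Delta>K uK) [(uK, uK)]"
    and counit_unit_K: "\<epsilon>K uK = 1"
  using bimonoid_K unfolding is_YD_bimonoid_def by blast+

lemma
  shows vector_space_K: "vector_space sK"
    and lin_mK_right: "lin sK sK (mK x)" and lin_mK_left: "lin sK sK (\<lambda>x. mK x y)"
    and mK_unit_right: "mK x uK = x"
  using algebra_K unfolding is_algebra_def linear_iff_lin by blast+

lemma
  shows tensor2_linear_\<Delta>K: "tensor2_linear sK sK sK \<Delta>K"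
    and coassoc_K: "tensor3_eq sK sK sK (sweedler3' \<Delta>K a) (sweedler3 \<Delta>K a)"
    and counit_K_right: "sum_list (map (\<lambda>(x, y). sK (\<epsilon>K y) x) (\<Delta>K a)) = a"
  using coalgebra_K unfolding is_coalgebra_def by blast+

lemma
  shows lin_act_right: "lin sK sK (act h)" and lin_act_left: "lin sH sK (\<lambda>h. act h v)"
  using YD_module_K unfolding is_YD_module_def linear_iff_lin by blast+

lemma lin_R: "lin sK sH R"
  using linear_R by (simp add: linear_iff_lin)

lemma lin_inv_R: "lin sH sK (inv R)"
  by (rule lin_inv[OF lin_R bij_R])

lemma R_inv_R [simp]: "R (inv R h) = h"
  using bij_R by (simp add: bij_is_surj surj_f_inv_f)

lemma inv_R_R [simp]: "inv R (R a) = a"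
  using bij_R by (simp add: bij_is_inj)

text \<open>\<open>R(1\<^sub>K)\<close> is idempotent by (RB1) and has the left inverse \<open>S\<^sub>H R(1\<^sub>K)\<close> since \<open>\<Delta>(1\<^sub>K) = 1\<^sub>K \<otimes> 1\<^sub>K\<close>.\<close>

lemma R_unit: "R uK = uH"
proof -
  have "sum_list (map (\<lambda>(a1, a2). mK a1 (act (R a2) uK)) (\<Delta>K uK))
      = sum_list (map (\<lambda>(x, y). sK (\<epsilon>K y) x) (\<Delta>K uK))"
    by (simp add: act_unit counit_R lin_scale[OF lin_mK_right] mK_unit_right split_def)
  then have idem: "mH (R uK) (R uK) = R uK"
    by (simp add: RB1 counit_K_right)
  have "uH = sum_list (map (\<lambda>(x, y). mH (SH x) y) (\<Delta>H (R uK)))"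
    using module.scale_one[OF vector_space_H[folded module_iff_vector_space]]
    by (simp add: antipode_H_left counit_R counit_unit_K)
  also have "\<dots> = sum_list (map (\<lambda>(x, y). mH (SH (R x)) (R y)) (\<Delta>K uK))"
    using bilinear_tensor2_eq[OF vector_space_H vector_space_H lin_mH_right
        lin_comp[OF lin_SH lin_mH_left] comult_R[of uK]]
    by (simp add: split_def o_def)
  also have "\<dots> = mH (SH (R uK)) (R uK)"
    using bilinear_tensor2_eq[OF vector_space_K vector_space_K
        lin_comp[OF lin_R lin_mH_right] lin_comp[OF lin_R lin_comp[OF lin_SH lin_mH_left]] comult_unit_K]
    by simp
  finally have inverse: "mH (SH (R uK)) (R uK) = uH" ..
  have "R uK = mH (mH (SH (R uK)) (R uK)) (R uK)"
    by (simp only: inverse mH_unit_left)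
  also have "\<dots> = uH"
    by (subst mH_assoc) (simp only: idem inverse)
  finally show ?thesis .
qed

lemma lin_SK: "lin sK sK SK"
  unfolding SK_of_def
  by (rule lin_bilinear_tensor2_linear[OF vector_space_K vector_space_K vector_space_K
        lin_comp[OF lin_comp[OF lin_comp[OF lin_R lin_SH] lin_inv_R] lin_act_right]
        lin_comp[OF lin_R lin_act_left] tensor2_linear_\<Delta>K])

lemma antipode_left: "sum_list (map (\<lambda>(x, y). mK (SK x) y) (\<Delta>K a)) = sK (\<epsilon>K a) uK"
proof -
  have "sum_list (map (\<lambda>(x, y). mK (SK x) y) (\<Delta>K a))
      = sum_list (map (\<lambda>(x, y, z). mK (act (R x) (inv R (SH (R y)))) z) (sweedler3' \<Delta>K a))"
    by (simp add: SK_of_def sweedler3'_def sum_list_map_concat lin_sum_list[OF lin_mK_left] split_def o_def)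
  also have "\<dots> = sum_list (map (\<lambda>(x, y, z). mK (act (R x) (inv R (SH (R y)))) z) (sweedler3 \<Delta>K a))"
    using trilinear_tensor3_eq[OF vector_space_K vector_space_K vector_space_K
        lin_comp[OF lin_comp[OF lin_R lin_act_left] lin_mK_left]
        lin_comp[OF lin_comp[OF lin_comp[OF lin_comp[OF lin_R lin_SH] lin_inv_R] lin_act_right] lin_mK_left]
        lin_mK_right coassoc_K]
    by simp
  also have "\<dots> = sum_list (map (\<lambda>(u, v, w). mK (act u (inv R (SH v))) (inv R w))
                    (map (\<lambda>(x, y, z). (R x, R y, R z)) (sweedler3 \<Delta>K a)))"
    by (simp add: split_def o_def)
  also have "\<dots> = sum_list (map (\<lambda>(u, v, w). mK (act u (inv R (SH v))) (inv R w)) (sweedler3 \<Delta>H (R a)))"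
    using trilinear_tensor3_eq[OF vector_space_H vector_space_H vector_space_H
        lin_comp[OF lin_act_left lin_mK_left]
        lin_comp[OF lin_comp[OF lin_comp[OF lin_SH lin_inv_R] lin_act_right] lin_mK_left]
        lin_comp[OF lin_inv_R lin_mK_right]
        tensor3_eq_sweedler3_hom[OF vector_space_H lin_R tensor2_linear_\<Delta>H comult_R]]
    by simp
  also have "\<dots> = sK (\<epsilon>K a) uK"
    by (simp add: RB3 counit_R)
  finally show ?thesis .
qed

lemma R_mult_SK:
  "R (sum_list (map (\<lambda>(x, y). mK x (SK y)) (\<Delta>K a))) = sum_list (map (\<lambda>(x, y). mH (R x) (SH (R y))) (\<Delta>K a))"
proof -
  have "sum_list (map (\<lambda>(x, y). mK x (SK y)) (\<Delta>K a))
      = sum_list (map (\<lambda>(x, y, z). mK x (act (R y) (inv R (SH (R z))))) (sweedler3 \<Delta>K a))"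
    by (simp add: SK_of_def sweedler3_def sum_list_map_concat lin_sum_list[OF lin_mK_right] split_def o_def)
  also have "\<dots> = sum_list (map (\<lambda>(x, y, z). mK x (act (R y) (inv R (SH (R z))))) (sweedler3' \<Delta>K a))"
    using trilinear_tensor3_eq[OF vector_space_K vector_space_K vector_space_K lin_mK_left
        lin_comp[OF lin_comp[OF lin_R lin_act_left] lin_mK_right]
        lin_comp[OF lin_comp[OF lin_comp[OF lin_comp[OF lin_R lin_SH] lin_inv_R] lin_act_right] lin_mK_right]
        coassoc_K]
    by simp
  also have "\<dots> = sum_list (map (\<lambda>(x, z). sum_list (map (\<lambda>(x1, x2). mK x1 (act (R x2) (inv R (SH (R z)))))
                    (\<Delta>K x))) (\<Delta>K a))"
    by (simp add: sweedler3'_def sum_list_map_concat split_def o_def)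
  moreover have "sum_list (map (\<lambda>(x1, x2). R (mK x1 (act (R x2) b))) (\<Delta>K x)) = mH (R x) (R b)" for x b
    using RB1[of x b] by (simp add: lin_sum_list[OF lin_R] split_def)
  ultimately show ?thesis
    by (simp add: lin_sum_list[OF lin_R] split_def)
qed

lemma antipode_right: "sum_list (map (\<lambda>(x, y). mK x (SK y)) (\<Delta>K a)) = sK (\<epsilon>K a) uK"
proof -
  have "R (sum_list (map (\<lambda>(x, y). mK x (SK y)) (\<Delta>K a)))
      = sum_list (map (\<lambda>(x, y). mH x (SH y)) (\<Delta>H (R a)))"
    unfolding R_mult_SK
    using bilinear_tensor2_eq[OF vector_space_H vector_space_H lin_comp[OF lin_SH lin_mH_right]
        lin_mH_left comult_R[of a]]
    by (simp add: split_def o_def)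
  also have "\<dots> = R (sK (\<epsilon>K a) uK)"
    by (simp add: antipode_H_right counit_R lin_scale[OF lin_R] R_unit)
  finally show ?thesis
    using bij_R by (simp add: bij_is_inj inj_eq)
qed

lemma YD_hopf_monoid: "is_YD_hopf_monoid sH mH uH \<Delta>H \<epsilon>H SH sK act \<rho> mK uK \<Delta>K \<epsilon>K SK"
  using bimonoid_K lin_SK vector_space_K antipode_left antipode_right
  unfolding is_YD_hopf_monoid_def linear_iff_lin by blast

end

theorem lemma4:
  fixes sH :: "'a::field \<Rightarrow> 'h::ab_group_add \<Rightarrow> 'h"
    and sK :: "'a \<Rightarrow> 'k::ab_group_add \<Rightarrow> 'k"
    and mH :: "'h \<Rightarrow> 'h \<Rightarrow> 'h" and uH :: 'h and \<Delta>H :: "'h \<Rightarrow> ('h \<times> 'h) list"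
    and \<epsilon>H :: "'h \<Rightarrow> 'a" and SH :: "'h \<Rightarrow> 'h"
    and act :: "'h \<Rightarrow> 'k \<Rightarrow> 'k" and \<rho> :: "'k \<Rightarrow> ('h \<times> 'k) list"
    and mK :: "'k \<Rightarrow> 'k \<Rightarrow> 'k" and uK :: 'k and \<Delta>K :: "'k \<Rightarrow> ('k \<times> 'k) list"
    and \<epsilon>K :: "'k \<Rightarrow> 'a" and R :: "'k \<Rightarrow> 'h"
  assumes "is_YD_rel_RB sH mH uH \<Delta>H \<epsilon>H SH sK act \<rho> mK uK \<Delta>K \<epsilon>K R"
  shows "(\<forall>a. sum_list (map (\<lambda>(x, y). mK (SK_of SH act \<Delta>K R x) y) (\<Delta>K a)) = sK (\<epsilon>K a) uK
            \<and> sum_list (map (\<lambda>(x, y). mK x (SK_of SH act \<Delta>K R y)) (\<Delta>K a)) = sK (\<epsilon>K a) uK)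
         \<and> is_YD_hopf_monoid sH mH uH \<Delta>H \<epsilon>H SH sK act \<rho> mK uK \<Delta>K \<epsilon>K (SK_of SH act \<Delta>K R)"
proof -
  interpret YD_rel_RB_operator sH sK mH uH \<Delta>H \<epsilon>H SH act \<rho> mK uK \<Delta>K \<epsilon>K R
    by unfold_locales (fact assms)
  show ?thesis
    using antipode_left antipode_right YD_hopf_monoid by blast
qed

end
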